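(* (i) For all $d\ge 0$, $1\le r\le d+1$ and $0\le j\le\lfloor (d-2)/2\rfloor$: $A(d+1,j,r)\le A(d+1,d-1-j,r)$. (ii) For all $d\ge1$ and $1\le r\le d$: $$A(d+1,0,r+1)\le A(d+1,1,r+1)\le\dots\le A(d+1,\lfloor d/2\rfloor,r+1)$$ and $$A(d+1,d,r+1)\le A(d+1,d-1,r+1)\le\dots\le A(d+1,\lceil d/2\rceil,r+1).$$
   Context: $S_d$ is the symmetric group on $[d]=\{1,\dots,d\}$. For $\sigma\in S_d$, its descent set is $D(\sigma)=\{i\in[d-1]:\sigma(i)>\sigma(i+1)\}$ and $\mathrm{des}(\sigma)=\#D(\sigma)$. For $0\le i\le d-1$ and $1\le j\le d$, $A(d,i,j)=\#\{\sigma\in S_d:\mathrm{des}(\sigma)=i,\ \sigma(1)=j\}$. *)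

theory Defs
  imports "HOL-Combinatorics.Permutations"
begin

definition descent_set :: "nat \<Rightarrow> (nat \<Rightarrow> nat) \<Rightarrow> nat set" where
  "descent_set d \<sigma> = {i \<in> {1..d - 1}. \<sigma> i > \<sigma> (i + 1)}"

definition des :: "nat \<Rightarrow> (nat \<Rightarrow> nat) \<Rightarrow> nat" where
  "des d \<sigma> = card (descent_set d \<sigma>)"

definition A :: "nat \<Rightarrow> nat \<Rightarrow> nat \<Rightarrow> nat" where
  "A d i j = card {\<sigma>. \<sigma> permutes {1..d} \<and> des d \<sigma> = i \<and> \<sigma> 1 = j}"

end

theory Submission
  imports Defs "HOL-Combinatorics.Multiset_Permutations"
begin

text \<open>
  For fixed n and r we study the profile i \<mapsto> A(n, i, r) and show by induction on n that it
  has a certain shape (predicate eulerian_shape below): it vanishes for i \<ge> n, it is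
  dominated by its reflection about (n - 2)/2 on the left half and dominates its reflection
  about n/2 on the right half, and it increases up to (n - 1) div 2 and decreases from n div 2.
  Corollary 4.4 is an instance of three of these conditions.

  The induction rests on two classical facts about permutations written in one-line notation:
  \<^item> inserting the new maximum n + 1 into a permutation of [n] at one of the n positions after
    the first letter either keeps the descent number (descent slots and the end) or raises it by
    one (ascent slots); hence for r \<le> n the profile for n + 1 arises from the one for n by the
    linear insertion step h \<mapsto> (\<lambda>i. (i + 1) h(i) + (n - i) h(i - 1));
  \<^item> complementing x \<mapsto> n + 1 - x turns i descents into n - 1 - i and first letter r into
    n + 1 - r, so the profile for r = n + 1 is the reversal of the profile for r = 1.
  Both operations preserve the shape, which gives the induction.
\<close>

fun list_des :: "nat list \<Rightarrow> nat" where
  "list_des (x # y # zs) = (if y < x then 1 else 0) + list_des (y # zs)"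
| "list_des _ = 0"

definition descent_positions :: "nat list \<Rightarrow> nat set" where
  "descent_positions xs = {p. 0 < p \<and> p < length xs \<and> xs ! p < xs ! (p - 1)}"

lemma descent_positions_subset: "descent_positions xs \<subseteq> {1..<length xs}"
  by (auto simp: descent_positions_def)

lemma descent_positions_Cons_Cons:
  "descent_positions (x # y # zs) = (if y < x then {1} else {}) \<union> Suc ` descent_positions (y # zs)"
proof (rule set_eqI)
  fix p
  show "p \<in> descent_positions (x # y # zs) \<longleftrightarrow>
        p \<in> (if y < x then {1} else {}) \<union> Suc ` descent_positions (y # zs)"
    by (cases p; cases "p - 1") (auto simp: descent_positions_def image_iff)
qed

lemma list_des_card: "list_des xs = card (descent_positions xs)"
proof (induction xs rule: list_des.induct)
  case (1 x y zs)
  have "finite (descent_positions (y # zs))" "0 \<notin> descent_positions (y # zs)"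
    using descent_positions_subset finite_subset by (blast, auto simp: descent_positions_def)
  then show ?case
    using 1 by (auto simp: descent_positions_Cons_Cons card_image card_insert_if)
qed (auto simp: descent_positions_def)

lemma list_des_le: "list_des xs \<le> length xs - 1"
  by (induction xs rule: list_des.induct) auto

lemma list_des_Cons:
  "list_des (a # xs) = (if xs \<noteq> [] \<and> hd xs < a then 1 else 0) + list_des xs"
  by (cases xs) auto

text \<open>Complementing the entries of a list without repetitions exchanges descents and ascents.\<close>

lemma list_des_complement:
  assumes "distinct xs" "\<forall>x\<in>set xs. x \<le> m"
  shows "list_des xs + list_des (map (\<lambda>x. m - x) xs) = length xs - 1"
  using assms by (induction xs rule: list_des.induct) auto

definition insert_at :: "nat \<Rightarrow> 'a \<Rightarrow> 'a list \<Rightarrow> 'a list" where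
  "insert_at p m ys = take p ys @ m # drop p ys"

lemma set_insert_at: "set (insert_at p m ys) = insert m (set ys)"
proof -
  have "set (take p ys) \<union> set (drop p ys) = set ys"
    by (metis append_take_drop_id set_append)
  then show ?thesis by (auto simp: insert_at_def)
qed

lemma distinct_insert_at:
  assumes "distinct ys" "m \<notin> set ys"
  shows "distinct (insert_at p m ys)"
proof -
  have "distinct (take p ys @ drop p ys)" using assms(1) by simp
  then show ?thesis
    using assms(2)
    by (auto simp: insert_at_def dest: in_set_takeD in_set_dropD simp del: append_take_drop_id)
qed

lemma hd_insert_at: "1 \<le> p \<Longrightarrow> ys \<noteq> [] \<Longrightarrow> hd (insert_at p m ys) = hd ys"
  by (cases ys; cases p) (auto simp: insert_at_def)

lemma insert_at_inj:
  assumes "m \<notin> set ys" "m \<notin> set zs" "p \<le> length ys" "q \<le> length zs"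
    and "insert_at p m ys = insert_at q m zs"
  shows "ys = zs \<and> p = q"
proof -
  have "m \<notin> set (take p ys)" "m \<notin> set (drop p ys)"
    using assms(1) by (auto dest: in_set_takeD in_set_dropD)
  then have "take p ys = take q zs \<and> drop p ys = drop q zs"
    using assms(5) append_Cons_eq_iff by (fastforce simp: insert_at_def)
  then show ?thesis
    using assms(3,4) by (metis append_take_drop_id length_take min.absorb2)
qed

definition ascent_slot :: "nat list \<Rightarrow> nat \<Rightarrow> bool" where
  "ascent_slot ys p \<longleftrightarrow> p < length ys \<and> \<not> ys ! p < ys ! (p - 1)"

lemma list_des_insert_at_max:
  assumes "\<forall>y\<in>set ys. y < m" "1 \<le> p" "p \<le> length ys"
  shows "list_des (insert_at p m ys) = list_des ys + (if ascent_slot ys p then 1 else 0)"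
  using assms unfolding insert_at_def ascent_slot_def
proof (induction ys arbitrary: p)
  case (Cons a zs)
  show ?case
  proof (cases "p = 1")
    case True
    then show ?thesis using Cons.prems by (cases zs) auto
  next
    case False
    then obtain q where q: "p = Suc q" "1 \<le> q" "q \<le> length zs"
      using Cons.prems by (cases p) auto
    then have "zs \<noteq> []" and "hd (take q zs @ m # drop q zs) = hd zs"
      by (cases zs; simp)+
    then show ?thesis
      using Cons.IH[of q] Cons.prems q by (cases q) (auto simp: list_des_Cons)
  qed
qed simp

text \<open>Of the slots 1, ..., n of a list of length n, exactly des + 1 are not ascent slots (the
  descents and the end) and n - 1 - des are.\<close>

lemma card_ascent_slots:
  "card {p \<in> {1..length ys}. ascent_slot ys p} = length ys - 1 - list_des ys"
proof -
  have "{p \<in> {1..length ys}. ascent_slot ys p} = {1..<length ys} - descent_positions ys"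
    by (auto simp: ascent_slot_def descent_positions_def)
  then show ?thesis
    using descent_positions_subset[of ys]
    by (simp add: card_Diff_subset finite_subset list_des_card)
qed

lemma card_non_ascent_slots:
  assumes "ys \<noteq> []"
  shows "card {p \<in> {1..length ys}. \<not> ascent_slot ys p} = list_des ys + 1"
proof -
  have "{p \<in> {1..length ys}. \<not> ascent_slot ys p} = insert (length ys) (descent_positions ys)"
    using assms descent_positions_subset[of ys]
    by (auto simp: ascent_slot_def descent_positions_def Suc_le_eq)
  moreover have "length ys \<notin> descent_positions ys" "finite (descent_positions ys)"
    using descent_positions_subset[of ys] finite_subset by auto
  ultimately show ?thesis by (simp add: list_des_card)
qed

definition A_list :: "nat \<Rightarrow> nat \<Rightarrow> nat \<Rightarrow> nat" where
  "A_list n i r = card {xs \<in> permutations_of_set {1..n}. list_des xs = i \<and> hd xs = r}"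

lemma length_permutation: "xs \<in> permutations_of_set {1..n} \<Longrightarrow> length xs = n"
  using length_finite_permutations_of_set by fastforce

definition one_line :: "nat \<Rightarrow> (nat \<Rightarrow> nat) \<Rightarrow> nat list" where
  "one_line n \<sigma> = map (\<lambda>k. \<sigma> (Suc k)) [0..<n]"

lemma one_line_nth: "k < n \<Longrightarrow> one_line n \<sigma> ! k = \<sigma> (Suc k)"
  by (simp add: one_line_def)

lemma length_one_line: "length (one_line n \<sigma>) = n"
  by (simp add: one_line_def)

lemma one_line_permutation:
  assumes "\<sigma> permutes {1..n}"
  shows "one_line n \<sigma> \<in> permutations_of_set {1..n}"
proof -
  have indices: "Suc ` {0..<n} = {1..n}"
    by (simp add: image_Suc_atLeastLessThan atLeastLessThanSuc_atLeastAtMost)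
  have "set (one_line n \<sigma>) = \<sigma> ` {1..n}"
    unfolding one_line_def set_map set_upt indices[symmetric] image_image ..
  moreover have "inj_on (\<lambda>k. \<sigma> (Suc k)) {0..<n}"
    using permutes_inj[OF assms] by (auto intro!: inj_onI dest: injD)
  ultimately show ?thesis
    using permutes_image[OF assms] unfolding permutations_of_set_def one_line_def
    by (simp add: distinct_map)
qed

lemma one_line_bij:
  "bij_betw (one_line n) {\<sigma>. \<sigma> permutes {1..n}} (permutations_of_set {1..n})"
proof (rule bij_betw_imageI)
  show inj: "inj_on (one_line n) {\<sigma>. \<sigma> permutes {1..n}}"
  proof (rule inj_onI, rule ext)
    fix \<sigma> \<tau> k
    assume \<sigma>: "\<sigma> \<in> {\<sigma>. \<sigma> permutes {1..n}}" and \<tau>: "\<tau> \<in> {\<sigma>. \<sigma> permutes {1..n}}"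
      and eq: "one_line n \<sigma> = one_line n \<tau>"
    show "\<sigma> k = \<tau> k"
    proof (cases "k \<in> {1..n}")
      case True
      then have "one_line n \<sigma> ! (k - 1) = \<sigma> k" "one_line n \<tau> ! (k - 1) = \<tau> k"
        by (auto simp: one_line_def)
      then show ?thesis using eq by simp
    next
      case False
      then show ?thesis using \<sigma> \<tau> by (simp add: permutes_not_in)
    qed
  qed
  have into: "one_line n \<sigma> \<in> permutations_of_set {1..n}" if "\<sigma> permutes {1..n}" for \<sigma>
    using that by (rule one_line_permutation)
  have "card (one_line n ` {\<sigma>. \<sigma> permutes {1..n}}) = card (permutations_of_set {1..n})"
    using inj by (simp add: card_image card_permutations card_permutations_of_set)
  then show "one_line n ` {\<sigma>. \<sigma> permutes {1..n}} = permutations_of_set {1..n}"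
    using into by (intro card_subset_eq) auto
qed

lemma des_one_line: "des n \<sigma> = list_des (one_line n \<sigma>)"
proof -
  have "descent_set n \<sigma> = descent_positions (one_line n \<sigma>)"
    by (auto simp: descent_set_def descent_positions_def one_line_nth length_one_line)
  then show ?thesis by (simp add: des_def list_des_card)
qed

lemma card_filter_bij:
  assumes "bij_betw f S T"
  shows "card {x \<in> S. P (f x)} = card {y \<in> T. P y}"
proof -
  have "bij_betw f {x \<in> S. P (f x)} {y \<in> T. P y}"
    using assms by (auto simp: bij_betw_def inj_on_def)
  then show ?thesis by (rule bij_betw_same_card)
qed

lemma A_eq_A_list:
  assumes "1 \<le> n"
  shows "A n i r = A_list n i r"
proof -
  have "hd (one_line n \<sigma>) = \<sigma> 1" for \<sigma>
    using assms by (simp add: one_line_def hd_map)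
  then have "A n i r = card {\<sigma> \<in> {\<sigma>. \<sigma> permutes {1..n}}.
                               list_des (one_line n \<sigma>) = i \<and> hd (one_line n \<sigma>) = r}"
    by (simp add: A_def des_one_line)
  also have "\<dots> = A_list n i r"
    unfolding A_list_def using card_filter_bij[OF one_line_bij] .
  finally show ?thesis .
qed

lemma A_list_vanish:
  assumes "1 \<le> n" "n \<le> i"
  shows "A_list n i r = 0"
proof -
  have "list_des xs < i" if "xs \<in> permutations_of_set {1..n}" for xs
    using list_des_le[of xs] length_permutation[OF that] assms by linarith
  then show ?thesis by (auto simp: A_list_def)
qed

lemma complement_bij:
  "bij_betw (map (\<lambda>x. Suc n - x)) (permutations_of_set {1..n}) (permutations_of_set {1..n})"
proof (rule bij_betw_imageI)
  let ?c = "\<lambda>x. Suc n - x"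
  have "map ?c (map ?c xs) = xs" if "xs \<in> permutations_of_set {1..n}" for xs
    using that unfolding map_map by (intro map_idI) (auto simp: permutations_of_set_def)
  then show "inj_on (map ?c) (permutations_of_set {1..n})"
    by (rule inj_on_inverseI)
  have "{1..n} \<subseteq> ?c ` {1..n}"
  proof
    fix y assume "y \<in> {1..n}"
    then have "y = ?c (?c y)" "?c y \<in> {1..n}" by auto
    then show "y \<in> ?c ` {1..n}" by blast
  qed
  then have "?c ` {1..n} = {1..n}" by auto
  moreover have "inj_on ?c {1..n}" by (auto simp: inj_on_def)
  ultimately show "map ?c ` permutations_of_set {1..n} = permutations_of_set {1..n}"
    using permutations_of_set_image_inj by metis
qed

lemma A_list_complement:
  assumes "1 \<le> r" "r \<le> n" "i \<le> n - 1"
  shows "A_list n i r = A_list n (n - 1 - i) (Suc n - r)"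
proof -
  let ?c = "\<lambda>x. Suc n - x"
  let ?L = "permutations_of_set {1..n}"
  have same: "(list_des xs = i \<and> hd xs = r) \<longleftrightarrow>
              (list_des (map ?c xs) = n - 1 - i \<and> hd (map ?c xs) = Suc n - r)" if "xs \<in> ?L" for xs
  proof -
    have "distinct xs" "set xs = {1..n}" "length xs = n"
      using that length_permutation by (auto simp: permutations_of_set_def)
    then have "list_des xs + list_des (map ?c xs) = n - 1"
      using list_des_complement[of xs "Suc n"] by auto
    moreover have "hd xs \<in> {1..n}"
      using \<open>set xs = {1..n}\<close> \<open>length xs = n\<close> assms hd_in_set[of xs] by force
    moreover have "hd (map ?c xs) = ?c (hd xs)"
      using \<open>length xs = n\<close> assms by (intro hd_map) auto
    ultimately show ?thesis
      using assms list_des_le[of xs] \<open>length xs = n\<close> by auto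
  qed
  have "A_list n i r =
        card {xs \<in> ?L. list_des (map ?c xs) = n - 1 - i \<and> hd (map ?c xs) = Suc n - r}"
    unfolding A_list_def using same by (metis (lifting))
  also have "\<dots> = A_list n (n - 1 - i) (Suc n - r)"
    unfolding A_list_def by (rule card_filter_bij[OF complement_bij])
  finally show ?thesis .
qed

lemma insert_max_permutation:
  assumes ys: "ys \<in> permutations_of_set {1..n}" and p: "p \<in> {1..n}"
  shows "insert_at p (Suc n) ys \<in> permutations_of_set {1..Suc n}"
    and "hd (insert_at p (Suc n) ys) \<noteq> Suc n"
proof -
  from ys p have "ys \<noteq> []" "Suc n \<notin> set ys" by (auto simp: permutations_of_set_def)
  then have "hd ys \<noteq> Suc n" using hd_in_set by metis
  with ys p \<open>ys \<noteq> []\<close> \<open>Suc n \<notin> set ys\<close>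
  show "insert_at p (Suc n) ys \<in> permutations_of_set {1..Suc n}"
    and "hd (insert_at p (Suc n) ys) \<noteq> Suc n"
    by (auto simp: permutations_of_set_def set_insert_at distinct_insert_at
        hd_insert_at atLeastAtMostSuc_conv)
qed

lemma remove_max:
  assumes xs: "xs \<in> permutations_of_set {1..Suc n}" and hd: "hd xs \<noteq> Suc n"
  obtains ys p where "ys \<in> permutations_of_set {1..n}" "p \<in> {1..n}" "xs = insert_at p (Suc n) ys"
proof -
  have "distinct xs" "set xs = {1..Suc n}"
    using xs by (auto simp: permutations_of_set_def)
  then have "Suc n \<in> set xs" by simp
  then obtain us vs where split: "xs = us @ Suc n # vs" by (meson split_list)
  with hd have "us \<noteq> []" by auto
  define ys where "ys = us @ vs"
  have ins: "xs = insert_at (length us) (Suc n) ys"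
    by (simp add: insert_at_def ys_def split)
  have "distinct ys" "Suc n \<notin> set ys" "set xs = insert (Suc n) (set ys)"
    using \<open>distinct xs\<close> by (auto simp: ys_def split)
  then have "set ys = {1..Suc n} - {Suc n}"
    using \<open>set xs = {1..Suc n}\<close> by auto
  also have "\<dots> = {1..n}" by auto
  finally have "ys \<in> permutations_of_set {1..n}"
    using \<open>distinct ys\<close> by (simp add: permutations_of_set_def)
  moreover have "length us \<in> {1..n}"
    using \<open>us \<noteq> []\<close> length_permutation[OF calculation] by (auto simp: ys_def Suc_le_eq)
  ultimately show ?thesis using ins that by blast
qed

lemma insert_max_bij:
  "bij_betw (\<lambda>(ys, p). insert_at p (Suc n) ys)
     (permutations_of_set {1..n} \<times> {1..n})
     {xs \<in> permutations_of_set {1..Suc n}. hd xs \<noteq> Suc n}"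
  (is "bij_betw ?ins ?P ?T")
proof (rule bij_betw_imageI)
  show "inj_on ?ins ?P"
  proof (rule inj_onI)
    fix x y assume "x \<in> ?P" "y \<in> ?P" "?ins x = ?ins y"
    moreover obtain ys p zs q where "x = (ys, p)" "y = (zs, q)" by fastforce
    ultimately show "x = y"
      using insert_at_inj[of "Suc n" ys zs p q]
      by (auto simp: permutations_of_set_def length_permutation)
  qed
  show "?ins ` ?P = ?T"
  proof
    show "?ins ` ?P \<subseteq> ?T" using insert_max_permutation by auto
    show "?T \<subseteq> ?ins ` ?P"
    proof
      fix xs assume "xs \<in> ?T"
      then have "xs \<in> permutations_of_set {1..Suc n}" "hd xs \<noteq> Suc n" by auto
      then obtain ys p where "ys \<in> permutations_of_set {1..n}" "p \<in> {1..n}"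
        "xs = insert_at p (Suc n) ys"
        by (rule remove_max)
      then show "xs \<in> ?ins ` ?P" by force
    qed
  qed
qed

lemma card_insertion_positions:
  assumes ys: "ys \<in> permutations_of_set {1..n}" and "1 \<le> n"
  shows "card {p \<in> {1..n}. list_des (insert_at p (Suc n) ys) = i} =
           (if list_des ys = i then i + 1 else 0) + (if list_des ys + 1 = i then n - i else 0)"
proof -
  have len: "length ys = n" using length_permutation[OF ys] .
  have "\<forall>y\<in>set ys. y < Suc n" using ys by (auto simp: permutations_of_set_def)
  then have positions: "{p \<in> {1..n}. list_des (insert_at p (Suc n) ys) = i} =
      {p \<in> {1..length ys}. list_des ys + (if ascent_slot ys p then 1 else 0) = i}"
    using len by (auto simp: list_des_insert_at_max)
  have "ys \<noteq> []" using len \<open>1 \<le> n\<close> by auto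
  consider "list_des ys = i" | "list_des ys + 1 = i" | "list_des ys \<noteq> i" "list_des ys + 1 \<noteq> i"
    by blast
  then show ?thesis
  proof cases
    case 1
    then have "{p \<in> {1..length ys}. list_des ys + (if ascent_slot ys p then 1 else 0) = i} =
               {p \<in> {1..length ys}. \<not> ascent_slot ys p}" by auto
    then show ?thesis
      using 1 positions card_non_ascent_slots[OF \<open>ys \<noteq> []\<close>] by simp
  next
    case 2
    then have "{p \<in> {1..length ys}. list_des ys + (if ascent_slot ys p then 1 else 0) = i} =
               {p \<in> {1..length ys}. ascent_slot ys p}" by auto
    then show ?thesis
      using 2 positions card_ascent_slots[of ys] len by simp
  next
    case 3
    then show ?thesis using positions by (auto split: if_splits)
  qed
qed

lemma A_list_rec:
  assumes "1 \<le> r" "r \<le> n"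
  shows "A_list (Suc n) i r =
           (i + 1) * A_list n i r + (if i = 0 then 0 else (n - i) * A_list n (i - 1) r)"
proof -
  define Q where "Q = {ys \<in> permutations_of_set {1..n}. hd ys = r}"
  define F where "F ys = {p \<in> {1..n}. list_des (insert_at p (Suc n) ys) = i}" for ys
  define w where
    "w ys = (if list_des ys = i then i + 1 else 0) + (if list_des ys + 1 = i then n - i else 0)" for ys
  have "A_list (Suc n) i r =
      card {yp \<in> permutations_of_set {1..n} \<times> {1..n}.
              list_des (insert_at (snd yp) (Suc n) (fst yp)) = i \<and>
              hd (insert_at (snd yp) (Suc n) (fst yp)) = r}"
  proof -
    have "{xs \<in> permutations_of_set {1..Suc n}. list_des xs = i \<and> hd xs = r} =
          {xs \<in> {xs \<in> permutations_of_set {1..Suc n}. hd xs \<noteq> Suc n}.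
             list_des xs = i \<and> hd xs = r}"
      using assms by auto
    then show ?thesis
      unfolding A_list_def
      using card_filter_bij[OF insert_max_bij, where P = "\<lambda>xs. list_des xs = i \<and> hd xs = r"]
      by (simp add: case_prod_beta)
  qed
  also have "\<dots> = card (Sigma Q F)"
    using assms by (intro arg_cong[where f = card]) (auto simp: Q_def F_def hd_insert_at
        length_permutation simp flip: length_0_conv)
  also have "\<dots> = (\<Sum>ys\<in>Q. card (F ys))"
    by (simp add: Q_def F_def card_SigmaI)
  also have "\<dots> = (\<Sum>ys\<in>Q. w ys)"
  proof (rule sum.cong)
    fix ys assume "ys \<in> Q"
    then show "card (F ys) = w ys"
      unfolding F_def w_def using assms by (intro card_insertion_positions) (auto simp: Q_def)
  qed simp
  also have "\<dots> = (i + 1) * card {ys \<in> Q. list_des ys = i} +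
                    (n - i) * card {ys \<in> Q. list_des ys + 1 = i}"
    by (simp add: w_def sum.distrib sum.inter_filter[symmetric] Q_def)
  also have "\<dots> = (i + 1) * A_list n i r + (if i = 0 then 0 else (n - i) * A_list n (i - 1) r)"
  proof -
    have "card {ys \<in> Q. list_des ys = i} = A_list n i r"
      by (simp add: A_list_def Q_def conj_commute conj_left_commute)
    moreover have "card {ys \<in> Q. list_des ys + 1 = i} = (if i = 0 then 0 else A_list n (i - 1) r)"
      by (auto simp: A_list_def Q_def conj_commute conj_left_commute
          intro!: arg_cong[where f = card])
    ultimately show ?thesis by simp
  qed
  finally show ?thesis .
qed

definition eulerian_shape :: "nat \<Rightarrow> (nat \<Rightarrow> nat) \<Rightarrow> bool" where
  "eulerian_shape n h \<longleftrightarrow> (\<forall>i. n \<le> i \<longrightarrow> h i = 0)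
     \<and> (\<forall>j. 2 * j + 2 \<le> n - 1 \<longrightarrow> h j \<le> h (n - 2 - j))
     \<and> (\<forall>j. 2 * j + 2 \<le> n - 1 \<longrightarrow> h (n - 1 - j) \<le> h (j + 1))
     \<and> (\<forall>i. i + 1 \<le> (n - 1) div 2 \<longrightarrow> h i \<le> h (i + 1))
     \<and> (\<forall>i. n div 2 \<le> i \<longrightarrow> h (i + 1) \<le> h i)"

definition insertion_step :: "nat \<Rightarrow> (nat \<Rightarrow> nat) \<Rightarrow> nat \<Rightarrow> nat" where
  "insertion_step n h i = (i + 1) * h i + (if i = 0 then 0 else (n - i) * h (i - 1))"

text \<open>The lemmas show,
  condition by condition, that the insertion step produces a profile of the same shape for
  n + 1; each estimate compares two linear combinations with equal total weight term by term.\<close>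

context
  fixes n :: nat and h :: "nat \<Rightarrow> nat"
  assumes shape: "eulerian_shape n h"
begin

lemma shape_vanish: "n \<le> i \<Longrightarrow> h i = 0"
  using shape by (simp add: eulerian_shape_def)

lemma shape_skew_low: "2 * j + 2 \<le> n - 1 \<Longrightarrow> h j \<le> h (n - 2 - j)"
  using shape by (simp add: eulerian_shape_def)

lemma shape_skew_high: "2 * j + 2 \<le> n - 1 \<Longrightarrow> h (n - 1 - j) \<le> h (j + 1)"
  using shape by (simp add: eulerian_shape_def)

lemma shape_incr: "i + 1 \<le> (n - 1) div 2 \<Longrightarrow> h i \<le> h (i + 1)"
  using shape by (simp add: eulerian_shape_def)

lemma shape_decr: "n div 2 \<le> i \<Longrightarrow> h (i + 1) \<le> h i"
  using shape by (simp add: eulerian_shape_def)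

lemma step_vanish: "Suc n \<le> i \<Longrightarrow> insertion_step n h i = 0"
  using shape_vanish[of i] shape_vanish[of "i - 1"] by (simp add: insertion_step_def)

lemma step_skew_low:
  assumes j: "2 * j + 2 \<le> Suc n - 1"
  shows "insertion_step n h j \<le> insertion_step n h (Suc n - 2 - j)"
proof -
  have k: "Suc n - 2 - j = n - 1 - j" by simp
  have k1: "n - 1 - j \<noteq> 0" "Suc (n - 1 - j) = n - j" "n - (n - 1 - j) = j + 1"
    "n - 1 - j - 1 = n - 2 - j"
    using j by linarith+
  have e: "insertion_step n h (n - 1 - j) = (n - j) * h (n - 1 - j) + (j + 1) * h (n - 2 - j)"
    using k1 by (simp add: insertion_step_def)
  have a: "h j \<le> h (n - 2 - j)"
  proof (cases "2 * j + 2 \<le> n - 1")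
    case True then show ?thesis by (rule shape_skew_low)
  next
    case False then have "n - 2 - j = j" using j by simp
    then show ?thesis by simp
  qed
  have b: "(if j = 0 then 0 else (n - j) * h (j - 1)) \<le> (n - j) * h (n - 1 - j)"
  proof (cases "j = 0")
    case False
    have "h (j - 1) \<le> h (n - 2 - (j - 1))" using shape_skew_low[of "j - 1"] j False by simp
    moreover have "n - 2 - (j - 1) = n - 1 - j" using j False by simp
    ultimately show ?thesis using False by simp
  qed simp
  have "insertion_step n h j = (j + 1) * h j + (if j = 0 then 0 else (n - j) * h (j - 1))"
    by (simp add: insertion_step_def)
  also have "\<dots> \<le> (j + 1) * h (n - 2 - j) + (n - j) * h (n - 1 - j)"
    using a b by (intro add_mono mult_le_mono2) auto
  finally show ?thesis using e k by simp
qed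

lemma step_skew_high:
  assumes j: "2 * j + 2 \<le> Suc n - 1"
  shows "insertion_step n h (Suc n - 1 - j) \<le> insertion_step n h (j + 1)"
proof -
  have k: "Suc n - 1 - j = n - j" "n - j \<noteq> 0" "n - (n - j) = j" "n - j - 1 = n - 1 - j"
    "Suc (n - j) = (n - j - 1) + 2"
    using j by auto
  have "insertion_step n h (n - j) = Suc (n - j) * h (n - j) + j * h (n - j - 1)"
    using k by (simp add: insertion_step_def)
  then have e1: "insertion_step n h (n - j) =
      (n - j - 1) * h (n - j) + 2 * h (n - j) + j * h (n - j - 1)"
    unfolding k(5) by (simp add: add_mult_distrib)
  have e2: "insertion_step n h (j + 1) = (j + 2) * h (j + 1) + (n - j - 1) * h j"
    by (simp add: insertion_step_def)
  have a: "h (n - j) \<le> h j"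
  proof (cases "j = 0")
    case True then show ?thesis using shape_vanish[of n] by simp
  next
    case False
    have "h (n - 1 - (j - 1)) \<le> h (j - 1 + 1)" using shape_skew_high[of "j - 1"] j False by simp
    moreover have "n - 1 - (j - 1) = n - j" "j - 1 + 1 = j" using j False by auto
    ultimately show ?thesis by simp
  qed
  have b: "h (n - j - 1) \<le> h (j + 1)"
  proof (cases "2 * j + 2 \<le> n - 1")
    case True then show ?thesis using shape_skew_high[of j] by simp
  next
    case False then have "n - j - 1 = j + 1" using j by simp
    then show ?thesis by simp
  qed
  have c: "h (n - j) \<le> h (n - j - 1)"
    using shape_decr[of "n - j - 1"] j k by simp
  have "insertion_step n h (n - j) \<le> (n - j - 1) * h j + 2 * h (j + 1) + j * h (j + 1)"
    unfolding e1 using a b c by (intro add_mono mult_le_mono2) auto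
  also have "\<dots> = insertion_step n h (j + 1)" using e2 by (simp add: algebra_simps)
  finally show ?thesis using k by simp
qed

lemma step_incr:
  assumes i: "i + 1 \<le> (Suc n - 1) div 2"
  shows "insertion_step n h i \<le> insertion_step n h (i + 1)"
proof -
  have e1: "insertion_step n h i = (i + 1) * h i + (if i = 0 then 0 else (n - i) * h (i - 1))"
    by (simp add: insertion_step_def)
  have e2: "insertion_step n h (i + 1) = (i + 2) * h (i + 1) + (n - i - 1) * h i"
    by (simp add: insertion_step_def)
  show ?thesis
  proof (cases "i + 1 \<le> (n - 1) div 2")
    case True
    have a: "h i \<le> h (i + 1)" using shape_incr True by blast
    have b: "(if i = 0 then 0 else (n - i) * h (i - 1)) \<le> (n - i) * h i"
    proof (cases "i = 0")
      case False then show ?thesis using shape_incr[of "i - 1"] True by simp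
    qed simp
    have "insertion_step n h i \<le> (i + 1) * h i + (n - i) * h i" using e1 b by simp
    also have "\<dots> = (i + 2) * h i + (n - i - 1) * h i"
    proof -
      have "(i + 1) + (n - i) = (i + 2) + (n - i - 1)" using i by simp
      then show ?thesis by (metis add_mult_distrib)
    qed
    also have "\<dots> \<le> insertion_step n h (i + 1)"
      unfolding e2 using a by (intro add_mono mult_le_mono2) auto
    finally show ?thesis .
  next
    case False
    then have n: "n = 2 * (i + 1)" using i by presburger
    have "(if i = 0 then 0 else (n - i) * h (i - 1)) \<le> (n - i) * h (i + 1)"
    proof (cases "i = 0")
      case False
      have "h (i - 1) \<le> h (n - 2 - (i - 1))" using shape_skew_low[of "i - 1"] n False by simp
      moreover have "n - 2 - (i - 1) = i + 1" using n False by simp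
      ultimately show ?thesis using False by simp
    qed simp
    moreover have "n - i = i + 2" "n - i - 1 = i + 1" using n by auto
    ultimately show ?thesis using e1 e2 by simp
  qed
qed

lemma step_decr:
  assumes n1: "1 \<le> n" and i: "Suc n div 2 \<le> i"
  shows "insertion_step n h (i + 1) \<le> insertion_step n h i"
proof (cases "n \<le> i")
  case True
  then show ?thesis using shape_vanish by (simp add: insertion_step_def)
next
  case False
  have i0: "i \<noteq> 0" using i n1 by auto
  have e1: "insertion_step n h i = (i + 1) * h i + (n - i) * h (i - 1)"
    using i0 by (simp add: insertion_step_def)
  have e2: "insertion_step n h (i + 1) = (i + 2) * h (i + 1) + (n - i - 1) * h i"
    by (simp add: insertion_step_def)
  have a: "h (i + 1) \<le> h i" using shape_decr i by simp
  show ?thesis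
  proof (cases "n div 2 \<le> i - 1")
    case True
    have b: "h i \<le> h (i - 1)" using shape_decr[OF True] i0 by simp
    have "insertion_step n h (i + 1) \<le> (i + 2) * h i + (n - i - 1) * h i"
      unfolding e2 using a by (intro add_mono mult_le_mono2) auto
    also have "\<dots> = (i + 1) * h i + (n - i) * h i"
    proof -
      have "(i + 2) + (n - i - 1) = (i + 1) + (n - i)" using False by simp
      then show ?thesis by (metis add_mult_distrib)
    qed
    also have "\<dots> \<le> insertion_step n h i"
      unfolding e1 using b by (intro add_mono mult_le_mono2) auto
    finally show ?thesis .
  next
    case c: False
    then have n: "n = 2 * i" using i n1 by presburger
    have b: "h (i + 1) \<le> h (i - 1)"
    proof (cases "i = 1")
      case True then show ?thesis using shape_vanish[of "i + 1"] n by simp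
    next
      case False
      then have "2 * (i - 2) + 2 \<le> n - 1" "n - 1 - (i - 2) = i + 1" "i - 2 + 1 = i - 1"
        using n i0 by auto
      then show ?thesis using shape_skew_high[of "i - 2"] by simp
    qed
    have "insertion_step n h (i + 1) = 2 * h (i + 1) + i * h (i + 1) + (i - 1) * h i"
      unfolding e2 using n by (simp add: add_mult_distrib)
    also have "\<dots> \<le> 2 * h i + i * h (i - 1) + (i - 1) * h i"
      using a b by (intro add_mono mult_le_mono2) auto
    also have "\<dots> = insertion_step n h i"
    proof -
      have "i + 1 = 2 + (i - 1)" using i0 by simp
      then have "(i + 1) * h i = 2 * h i + (i - 1) * h i" by (metis add_mult_distrib)
      then show ?thesis unfolding e1 using n by simp
    qed
    finally show ?thesis .
  qed
qed

lemma shape_insertion_step: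
  assumes "1 \<le> n"
  shows "eulerian_shape (Suc n) (insertion_step n h)"
  unfolding eulerian_shape_def
  using step_vanish step_skew_low step_skew_high step_incr step_decr[OF assms] by blast

end

text \<open>Reversing a profile on {0..n-1} swaps the two comparison conditions and the increasing and
  decreasing parts, so it preserves the shape.\<close>

definition reverse_profile :: "nat \<Rightarrow> (nat \<Rightarrow> nat) \<Rightarrow> nat \<Rightarrow> nat" where
  "reverse_profile n h i = (if i < n then h (n - 1 - i) else 0)"

lemma shape_reverse:
  assumes shape: "eulerian_shape n h"
  shows "eulerian_shape n (reverse_profile n h)"
proof -
  let ?g = "reverse_profile n h"
  have skew_low: "?g j \<le> ?g (n - 2 - j)" if j: "2 * j + 2 \<le> n - 1" for j
    using shape_skew_high[OF shape j] j by (simp add: reverse_profile_def)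
  have skew_high: "?g (n - 1 - j) \<le> ?g (j + 1)" if j: "2 * j + 2 \<le> n - 1" for j
  proof -
    have "n - 1 - (n - 1 - j) = j" "n - 1 - (j + 1) = n - 2 - j" "j + 1 < n" using j by auto
    then show ?thesis using shape_skew_low[OF shape j] j by (simp add: reverse_profile_def)
  qed
  have incr: "?g i \<le> ?g (i + 1)" if i: "i + 1 \<le> (n - 1) div 2" for i
  proof -
    have "n div 2 \<le> n - 2 - i" "n - 1 - i = (n - 2 - i) + 1" "n - 1 - (i + 1) = n - 2 - i"
      "i + 1 < n"
      using i by linarith+
    then show ?thesis using shape_decr[OF shape, of "n - 2 - i"] i by (simp add: reverse_profile_def)
  qed
  have decr: "?g (i + 1) \<le> ?g i" if i: "n div 2 \<le> i" for i
  proof (cases "i + 1 < n")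
    case True
    then have "(n - 2 - i) + 1 \<le> (n - 1) div 2" "n - 1 - i = (n - 2 - i) + 1"
      "n - 1 - (i + 1) = n - 2 - i"
      using i by linarith+
    then show ?thesis using shape_incr[OF shape, of "n - 2 - i"] True by (simp add: reverse_profile_def)
  qed (simp add: reverse_profile_def)
  show ?thesis
    unfolding eulerian_shape_def using skew_low skew_high incr decr
    by (simp add: reverse_profile_def)
qed

text \<open>Main induction: for r \<le> n the profile for n + 1 is the insertion step of the profile for
  n; for r = n + 1 it is the reversal of the profile for r = 1.\<close>

lemma A_list_shape:
  assumes "1 \<le> n"
  shows "1 \<le> r \<Longrightarrow> r \<le> n \<Longrightarrow> eulerian_shape n (\<lambda>i. A_list n i r)"
  using assms
proof (induction n arbitrary: r rule: nat_induct_at_least)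
  case base
  then show ?case using A_list_vanish[of 1] by (simp add: eulerian_shape_def)
next
  case (Suc n)
  have below: "eulerian_shape (Suc n) (\<lambda>i. A_list (Suc n) i r)" if "1 \<le> r" "r \<le> n" for r
  proof -
    have "(\<lambda>i. A_list (Suc n) i r) = insertion_step n (\<lambda>i. A_list n i r)"
      using A_list_rec[OF that] by (simp add: insertion_step_def fun_eq_iff)
    then show ?thesis using shape_insertion_step Suc.IH that \<open>1 \<le> n\<close> by simp
  qed
  show ?case
  proof (cases "r \<le> n")
    case True then show ?thesis using below Suc.prems by simp
  next
    case False
    then have "r = Suc n" using Suc.prems by simp
    then have "(\<lambda>i. A_list (Suc n) i r) = reverse_profile (Suc n) (\<lambda>i. A_list (Suc n) i 1)"
      using A_list_complement[of "Suc n" "Suc n"] A_list_vanish[of "Suc n" _ r]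
      by (auto simp: reverse_profile_def fun_eq_iff)
    then show ?thesis using shape_reverse below[of 1] \<open>1 \<le> n\<close> by simp
  qed
qed

lemma A_shape:
  assumes "1 \<le> r" "r \<le> n"
  shows "eulerian_shape n (\<lambda>i. A n i r)"
  using A_list_shape[OF _ assms] assms A_eq_A_list by simp

theorem corollary4p4:
  shows "(\<forall>d r j. 1 \<le> r \<and> r \<le> d + 1 \<and> 2 * j + 2 \<le> d
            \<longrightarrow> A (d + 1) j r \<le> A (d + 1) (d - 1 - j) r)
       \<and> (\<forall>d r. 1 \<le> d \<and> 1 \<le> r \<and> r \<le> d \<longrightarrow>
            (\<forall>i. i + 1 \<le> d div 2 \<longrightarrow> A (d + 1) i (r + 1) \<le> A (d + 1) (i + 1) (r + 1))
          \<and> (\<forall>i. (d + 1) div 2 \<le> i \<and> i + 1 \<le> d \<longrightarrow> A (d + 1) (i + 1) (r + 1) \<le> A (d + 1) i (r + 1)))"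
proof (intro conjI allI impI)
  fix d r j :: nat assume "1 \<le> r \<and> r \<le> d + 1 \<and> 2 * j + 2 \<le> d"
  then show "A (d + 1) j r \<le> A (d + 1) (d - 1 - j) r"
    using shape_skew_low[OF A_shape, of r "d + 1" j] by simp
next
  fix d r i :: nat assume "1 \<le> d \<and> 1 \<le> r \<and> r \<le> d" "i + 1 \<le> d div 2"
  then show "A (d + 1) i (r + 1) \<le> A (d + 1) (i + 1) (r + 1)"
    using shape_incr[OF A_shape, of "r + 1" "d + 1" i] by simp
next
  fix d r i :: nat assume "1 \<le> d \<and> 1 \<le> r \<and> r \<le> d" "(d + 1) div 2 \<le> i \<and> i + 1 \<le> d"
  then show "A (d + 1) (i + 1) (r + 1) \<le> A (d + 1) i (r + 1)"
    using shape_decr[OF A_shape, of "r + 1" "d + 1" i] by simp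
qed

end
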